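(* There is a constant $C_{\rm dist}>0$ depending only on $d$, $\widehat{\mathcal T}^0$ and $(p_1,\dots,p_d)$ such that: for every admissible hierarchical mesh $\widehat{\mathcal T}_\bullet$ and every $\widehat T'\in\widehat{\mathcal T}_\bullet$, with $\widehat{\mathcal T}_\circ={\tt refine}(\widehat{\mathcal T}_\bullet,\{\widehat T'\})$, it holds that ${\rm dist}(\widehat T,\widehat T')\le C_{\rm dist}\,2^{-{\rm level}(\widehat T)}$ for all $\widehat T\in\widehat{\mathcal T}_\circ\setminus\widehat{\mathcal T}_\bullet$, where ${\rm dist}$ denotes the Euclidean distance between the midpoints of the two boxes.
   Context: Parameter domain $\widehat\Omega=(0,1)^d$, $d\ge2$; degrees $p_1,\dots,p_d\ge1$. For each $i$, $\widehat{\mathcal K}^0_i$ is a $p_i$-open knot vector in $[0,1]$ (first $p_i+1$ knots $0$, last $p_i+1$ knots $1$, interior multiplicities $\le p_i$); $\widehat{\mathcal K}^{k+1}_i$ arises from $\widehat{\mathcal K}^k_i$ by inserting each nondegenerate span's midpoint once. $\widehat{\mathcal B}^k$: tensor-product B-splines of degree $(p_1,\dots,p_d)$ for $\widehat{\mathcal K}^k$; $\widehat{\mathcal T}^k$: closed cells of level $k$. A hierarchical mesh is given by closed sets $[0,1]^d=\widehat\Omega^0_\bullet\supseteq\widehat\Omega^1_\bullet\supseteq\cdots$, each $\widehat\Omega^k_\bullet$ ($k\ge1$) a union of cells of $\widehat{\mathcal T}^{k-1}$, eventually empty; mesh $\widehat{\mathcal T}_\bullet=\bigcup_k\{\widehat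 T\in\widehat{\mathcal T}^k:\widehat T\subseteq\widehat\Omega^k_\bullet,\widehat T\not\subseteq\widehat\Omega^{k+1}_\bullet\}$, ${\rm level}(\widehat T)=k$; hierarchical basis $\widehat{\mathcal H}_\bullet=\bigcup_k\{\widehat\beta\in\widehat{\mathcal B}^k:{\rm supp}\,\widehat\beta\subseteq\widehat\Omega^k_\bullet,{\rm supp}\,\widehat\beta\not\subseteq\widehat\Omega^{k+1}_\bullet\}$. Neighbors $\mathcal N_\bullet(\widehat T)=\{\widehat T'\in\widehat{\mathcal T}_\bullet:\exists\widehat\beta\in\widehat{\mathcal H}_\bullet,\widehat T,\widehat T'\subseteq{\rm supp}\,\widehat\beta\}$; bad neighbors $\mathcal N^{\rm bad}_\bullet(\widehat T)=\{\widehat T'\in\mathcal N_\bullet(\widehat T):{\rm level}(\widehat T')={\rm level}(\widehat T)-1\}$. Admissible: $|{\rm level}(\widehat T)-{\rm level}(\widehat T')|\le1$ whenever $\widehat T'\in\mathcal N_\bullet(\widehat T)$. ${\tt refine}(\widehat{\mathcal T}_\bullet,\widehat{\mathcal M})$: $\widehat{\mathcal M}^{(0)}=\widehat{\mathcal M}$, $\widehat{\mathcal M}^{(i+1)}=\widehat{\mathcal M}^{(i)}\cup\bigcup_{\widehat T\in\widehat{\mathcal M}^{(i)}}\mathcal N^{\rm bad}_\bullet(\widehat T)$ until stationary; each $\widehat T$ in the final set is added to $\widehat\Omega^{{\rm level}(\widehat T)+1}$. *)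

theory Defs
  imports "HOL-Analysis.Analysis"
begin

definition open_knots :: "nat \<Rightarrow> real list \<Rightarrow> bool" where
  "open_knots p ks \<longleftrightarrow> sorted ks \<and> set ks \<subseteq> {0..1} \<and>
     count_list ks 0 = p + 1 \<and> count_list ks 1 = p + 1 \<and>
     (\<forall>x\<in>set ks. 0 < x \<and> x < 1 \<longrightarrow> count_list ks x \<le> p)"

definition is_span :: "real list \<Rightarrow> real \<Rightarrow> real \<Rightarrow> bool" where
  "is_span ks a b \<longleftrightarrow> a \<in> set ks \<and> b \<in> set ks \<and> a < b \<and> \<not> (\<exists>c\<in>set ks. a < c \<and> c < b)"

definition span_midpoints :: "real list \<Rightarrow> real set" where
  "span_midpoints ks = {(a + b) / 2 | a b. is_span ks a b}"

definition refine_knots :: "real list \<Rightarrow> real list" where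
  "refine_knots ks = sort (ks @ sorted_list_of_set (span_midpoints ks))"

definition knots :: "('n \<Rightarrow> real list) \<Rightarrow> nat \<Rightarrow> 'n \<Rightarrow> real list" where
  "knots K0 k i = (refine_knots ^^ k) (K0 i)"

section \<open>B-splines (Cox--de Boor, with the convention x/0 = 0)\<close>

fun bspl :: "real list \<Rightarrow> nat \<Rightarrow> nat \<Rightarrow> real \<Rightarrow> real" where
  "bspl t 0 j x = (if t ! j \<le> x \<and> x < t ! (j + 1) then 1 else 0)"
| "bspl t (Suc q) j x =
     (x - t ! j) / (t ! (j + q + 1) - t ! j) * bspl t q j x
   + (t ! (j + q + 2) - x) / (t ! (j + q + 2) - t ! (j + 1)) * bspl t q (j + 1) x"

definition tp_bspline :: "('n::finite \<Rightarrow> nat) \<Rightarrow> ('n \<Rightarrow> real list) \<Rightarrow> nat \<Rightarrow> ('n \<Rightarrow> nat)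
    \<Rightarrow> real^'n \<Rightarrow> real" where
  "tp_bspline p K0 k j x = (\<Prod>i\<in>UNIV. bspl (knots K0 k i) (p i) (j i) (x $ i))"

definition bsplines :: "('n::finite \<Rightarrow> nat) \<Rightarrow> ('n \<Rightarrow> real list) \<Rightarrow> nat \<Rightarrow> (real^'n \<Rightarrow> real) set" where
  "bsplines p K0 k = {tp_bspline p K0 k j | j. \<forall>i. j i + p i + 1 < length (knots K0 k i)}"

definition supp :: "(real^'n \<Rightarrow> real) \<Rightarrow> (real^'n) set" where
  "supp f = closure {x. f x \<noteq> 0}"

definition cells :: "('n::finite \<Rightarrow> real list) \<Rightarrow> nat \<Rightarrow> (real^'n) set set" where
  "cells K0 k = {cbox a b | a b. \<forall>i. is_span (knots K0 k i) (a $ i) (b $ i)}"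

definition hier_domains :: "('n::finite \<Rightarrow> real list) \<Rightarrow> (nat \<Rightarrow> (real^'n) set) \<Rightarrow> bool" where
  "hier_domains K0 \<Omega> \<longleftrightarrow> \<Omega> 0 = cbox (vec 0) (vec 1) \<and> (\<forall>k. \<Omega> (Suc k) \<subseteq> \<Omega> k) \<and>
     (\<forall>k. \<exists>S \<subseteq> cells K0 k. \<Omega> (Suc k) = \<Union>S) \<and> (\<exists>N. \<forall>k\<ge>N. \<Omega> k = {})"

definition mesh :: "('n::finite \<Rightarrow> real list) \<Rightarrow> (nat \<Rightarrow> (real^'n) set) \<Rightarrow> (nat \<times> (real^'n) set) set" where
  "mesh K0 \<Omega> = {(k, T) | k T. T \<in> cells K0 k \<and> T \<subseteq> \<Omega> k \<and> \<not> T \<subseteq> \<Omega> (Suc k)}"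

definition hbasis :: "('n::finite \<Rightarrow> nat) \<Rightarrow> ('n \<Rightarrow> real list) \<Rightarrow> (nat \<Rightarrow> (real^'n) set)
    \<Rightarrow> (real^'n \<Rightarrow> real) set" where
  "hbasis p K0 \<Omega> = (\<Union>k. {\<beta> \<in> bsplines p K0 k. supp \<beta> \<subseteq> \<Omega> k \<and> \<not> supp \<beta> \<subseteq> \<Omega> (Suc k)})"

definition neighbors :: "('n::finite \<Rightarrow> nat) \<Rightarrow> ('n \<Rightarrow> real list) \<Rightarrow> (nat \<Rightarrow> (real^'n) set)
    \<Rightarrow> nat \<times> (real^'n) set \<Rightarrow> (nat \<times> (real^'n) set) set" where
  "neighbors p K0 \<Omega> T = {T' \<in> mesh K0 \<Omega>. \<exists>\<beta> \<in> hbasis p K0 \<Omega>. snd T \<subseteq> supp \<beta> \<and> snd T' \<subseteq> supp \<beta>}"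

definition bad_neighbors :: "('n::finite \<Rightarrow> nat) \<Rightarrow> ('n \<Rightarrow> real list) \<Rightarrow> (nat \<Rightarrow> (real^'n) set)
    \<Rightarrow> nat \<times> (real^'n) set \<Rightarrow> (nat \<times> (real^'n) set) set" where
  "bad_neighbors p K0 \<Omega> T = {T' \<in> neighbors p K0 \<Omega> T. fst T' + 1 = fst T}"

definition admissible :: "('n::finite \<Rightarrow> nat) \<Rightarrow> ('n \<Rightarrow> real list) \<Rightarrow> (nat \<Rightarrow> (real^'n) set) \<Rightarrow> bool" where
  "admissible p K0 \<Omega> \<longleftrightarrow> (\<forall>T \<in> mesh K0 \<Omega>. \<forall>T' \<in> neighbors p K0 \<Omega> T.
      \<bar>int (fst T) - int (fst T')\<bar> \<le> 1)"

fun marked :: "('n::finite \<Rightarrow> nat) \<Rightarrow> ('n \<Rightarrow> real list) \<Rightarrow> (nat \<Rightarrow> (real^'n) set)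
    \<Rightarrow> (nat \<times> (real^'n) set) set \<Rightarrow> nat \<Rightarrow> (nat \<times> (real^'n) set) set" where
  "marked p K0 \<Omega> M 0 = M"
| "marked p K0 \<Omega> M (Suc i) = marked p K0 \<Omega> M i \<union> (\<Union>T \<in> marked p K0 \<Omega> M i. bad_neighbors p K0 \<Omega> T)"

text \<open>The final (stationary) marked set is the union of the increasing sequence.\<close>
definition marked_final :: "('n::finite \<Rightarrow> nat) \<Rightarrow> ('n \<Rightarrow> real list) \<Rightarrow> (nat \<Rightarrow> (real^'n) set)
    \<Rightarrow> (nat \<times> (real^'n) set) set \<Rightarrow> (nat \<times> (real^'n) set) set" where
  "marked_final p K0 \<Omega> M = (\<Union>i. marked p K0 \<Omega> M i)"

definition refine :: "('n::finite \<Rightarrow> nat) \<Rightarrow> ('n \<Rightarrow> real list) \<Rightarrow> (nat \<Rightarrow> (real^'n) set)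
    \<Rightarrow> (nat \<times> (real^'n) set) set \<Rightarrow> nat \<Rightarrow> (real^'n) set" where
  "refine p K0 \<Omega> M k = (case k of 0 \<Rightarrow> \<Omega> 0
     | Suc l \<Rightarrow> \<Omega> (Suc l) \<union> \<Union>{T. (l, T) \<in> marked_final p K0 \<Omega> M})"

definition box_center :: "(real^'n::finite) set \<Rightarrow> real^'n" where
  "box_center T = (\<chi> i. (Inf ((\<lambda>x. x $ i) ` T) + Sup ((\<lambda>x. x $ i) ` T)) / 2)"

end

theory Submission
  imports Defs
begin

text \<open>Spans of level k have length at most 2^-k, so the support of a level-k B-spline
  has width at most (p+1) 2^-k in each direction. A mesh cell of level l meeting the support
  of a hierarchical basis function of level k' is a neighbor of a mesh cell of level k'
  inside that support, so admissibility forces l \<le> k'+1 and the centers of any two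
  cells in that support are within O(2^-l). Along a chain of bad neighbors the levels
  drop by one at each step, so these distances sum to a geometric series dominated by the
  last term. Finally every new cell of level l+1 meets a marked cell of level l.\<close>

section \<open>Knot vectors\<close>

lemma finite_span_midpoints: "finite (span_midpoints ks)"
proof -
  have "span_midpoints ks \<subseteq> (\<lambda>(a, b). (a + b) / 2) ` (set ks \<times> set ks)"
    unfolding span_midpoints_def is_span_def by force
  then show ?thesis by (rule finite_subset) auto
qed

lemma set_refine_knots: "set (refine_knots ks) = set ks \<union> span_midpoints ks"
  unfolding refine_knots_def using finite_span_midpoints by simp

lemma knots_0 [simp]: "knots K0 0 i = K0 i"
  unfolding knots_def by simp

lemma knots_Suc [simp]: "knots K0 (Suc k) i = refine_knots (knots K0 k i)"
  unfolding knots_def by simp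

lemma sorted_knots: "sorted (K0 i) \<Longrightarrow> sorted (knots K0 k i)"
  by (cases k) (simp_all add: refine_knots_def)

lemma exists_span_containing:
  fixes t :: "real list"
  assumes "lo \<in> set t" "hi \<in> set t" "lo < hi" "lo \<le> x" "x \<le> hi"
  obtains a b where "is_span t a b" "lo \<le> a" "a \<le> x" "x \<le> b" "b \<le> hi"
proof -
  define A where "A = {c\<in>set t. c \<le> x \<and> c < hi}"
  have A: "finite A" "lo \<in> A" unfolding A_def using assms by auto
  define a where "a = Max A"
  have a: "a \<in> A" "\<And>c. c \<in> A \<Longrightarrow> c \<le> a" using A unfolding a_def by (auto intro: Max_in)
  define B where "B = {c\<in>set t. a < c}"
  have B: "finite B" "hi \<in> B" unfolding B_def using a assms A_def by auto
  define b where "b = Min B"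
  have b: "b \<in> B" "\<And>c. c \<in> B \<Longrightarrow> b \<le> c" using B unfolding b_def by (auto intro: Min_in)
  have "b \<le> hi" using b B by auto
  have "x \<le> b"
  proof (rule ccontr)
    assume "\<not> x \<le> b"
    then have "b \<in> A" using b(1) assms(5) unfolding A_def B_def by auto
    then show False using a(2) b(1) unfolding B_def by force
  qed
  have "is_span t a b"
    unfolding is_span_def using a(1) b(1) b(2) unfolding A_def B_def by force
  moreover have "lo \<le> a" using a(2) A by auto
  ultimately show ?thesis using that a(1) \<open>x \<le> b\<close> \<open>b \<le> hi\<close> unfolding A_def by blast
qed

lemma refine_knots_between_knots:
  assumes "x \<in> set (refine_knots ks)"
  obtains lo hi where "lo \<in> set ks" "hi \<in> set ks" "lo \<le> x" "x \<le> hi"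
  using assms unfolding set_refine_knots span_midpoints_def is_span_def
  by (auto intro: that)

text \<open>The enclosing span of the old knot vector has its midpoint outside the new span.\<close>

lemma span_refine_knots_le_half:
  assumes h: "\<And>a b. is_span ks a b \<Longrightarrow> b - a \<le> h"
    and sp: "is_span (refine_knots ks) a b"
  shows "b - a \<le> h / 2"
proof -
  have ab: "a < b" "a \<in> set (refine_knots ks)" "b \<in> set (refine_knots ks)"
    and gap: "\<And>c. c \<in> set (refine_knots ks) \<Longrightarrow> \<not> (a < c \<and> c < b)"
    using sp unfolding is_span_def by auto
  define m where "m = (a + b) / 2"
  obtain lo where lo: "lo \<in> set ks" "lo \<le> a" using refine_knots_between_knots[OF ab(2)] by metis
  obtain hi where hi: "hi \<in> set ks" "b \<le> hi" using refine_knots_between_knots[OF ab(3)] by metis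
  have "lo < hi" "lo \<le> m" "m \<le> hi" using lo(2) hi(2) ab(1) unfolding m_def by auto
  with lo(1) hi(1) obtain a' b' where sp': "is_span ks a' b'" "a' \<le> m" "m \<le> b'"
    using exists_span_containing[of lo ks hi m] by metis
  have "a' \<in> set (refine_knots ks)" "b' \<in> set (refine_knots ks)"
    using sp'(1) unfolding set_refine_knots is_span_def by auto
  then have "a' \<le> a" "b \<le> b'" using gap sp'(2,3) ab(1) unfolding m_def by force+
  moreover have "(a' + b') / 2 \<in> set (refine_knots ks)"
    using sp'(1) unfolding set_refine_knots span_midpoints_def by auto
  then have "(a' + b') / 2 \<le> a \<or> b \<le> (a' + b') / 2" using gap by force
  ultimately show ?thesis using h[OF sp'(1)] by auto
qed

lemma span_knots_le:
  assumes "set (K0 i) \<subseteq> {0..1}" "is_span (knots K0 k i) a b"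
  shows "b - a \<le> (1/2)^k"
  using assms(2)
proof (induction k arbitrary: a b)
  case 0
  then have "a \<in> {0..1}" "b \<in> {0..1}" using assms(1) unfolding is_span_def by auto
  then show ?case by simp
next
  case (Suc k)
  then show ?case using span_refine_knots_le_half[of "knots K0 k i" "(1/2)^k" a b] by simp
qed

lemma nth_Suc_is_span:
  assumes "sorted t" "m + 1 < length t" "t ! m < t ! (m + 1)"
  shows "is_span t (t ! m) (t ! (m + 1))"
  unfolding is_span_def
proof (intro conjI)
  show "\<not> (\<exists>c\<in>set t. t ! m < c \<and> c < t ! (m + 1))"
  proof
    assume "\<exists>c\<in>set t. t ! m < c \<and> c < t ! (m + 1)"
    then obtain r where r: "r < length t" "t ! m < t ! r" "t ! r < t ! (m + 1)"
      by (metis in_set_conv_nth)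
    show False
    proof (cases "r \<le> m")
      case True
      then show False using sorted_nth_mono[OF assms(1) True] r assms(2) by auto
    next
      case False
      then show False using sorted_nth_mono[OF assms(1), of "m + 1" r] r by auto
    qed
  qed
qed (use assms in auto)

lemma knot_distance_le:
  assumes "sorted t" "\<And>a b. is_span t a b \<Longrightarrow> b - a \<le> h" "0 \<le> h" "j + q < length t"
  shows "t ! (j + q) - t ! j \<le> real q * h"
  using assms(4)
proof (induction q)
  case (Suc q)
  have "t ! (j + q + 1) - t ! (j + q) \<le> h"
    using nth_Suc_is_span[OF assms(1), of "j + q"] assms(2,3) Suc.prems
    by (cases "t ! (j + q) < t ! (j + q + 1)") auto
  then show ?case using Suc by (auto simp: algebra_simps)
qed simp

section \<open>Supports of B-splines\<close>

lemma bspl_nonzero_imp_between: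
  assumes "sorted t" "j + q + 1 < length t" "bspl t q j x \<noteq> 0"
  shows "t ! j \<le> x \<and> x < t ! (j + q + 1)"
  using assms(2,3)
proof (induction q arbitrary: j)
  case 0
  then show ?case by (auto split: if_splits)
next
  case (Suc q)
  have "t ! j \<le> t ! (j + 1)" "t ! (j + q + 1) \<le> t ! (j + q + 2)"
    using Suc.prems(1) assms(1) by (auto intro: sorted_nth_mono)
  moreover have "bspl t q j x \<noteq> 0 \<or> bspl t q (j + 1) x \<noteq> 0" using Suc.prems(2) by auto
  ultimately show ?case using Suc.IH[of j] Suc.IH[of "j + 1"] Suc.prems(1) by fastforce
qed

lemma bspl_terms_nonneg:
  assumes "sorted t" "j + q + 2 < length t"
    and "0 \<le> bspl t q j x" "0 \<le> bspl t q (j + 1) x"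
  shows "0 \<le> (x - t ! j) / (t ! (j + q + 1) - t ! j) * bspl t q j x"
    and "0 \<le> (t ! (j + q + 2) - x) / (t ! (j + q + 2) - t ! (j + 1)) * bspl t q (j + 1) x"
proof -
  show "0 \<le> (x - t ! j) / (t ! (j + q + 1) - t ! j) * bspl t q j x"
  proof (cases "bspl t q j x = 0")
    case False
    then have "t ! j \<le> x \<and> x < t ! (j + q + 1)"
      using bspl_nonzero_imp_between[OF assms(1), of j q x] assms(2) by simp
    then show ?thesis using assms(3) by (auto intro!: mult_nonneg_nonneg divide_nonneg_nonneg)
  qed simp
  show "0 \<le> (t ! (j + q + 2) - x) / (t ! (j + q + 2) - t ! (j + 1)) * bspl t q (j + 1) x"
  proof (cases "bspl t q (j + 1) x = 0")
    case False
    then have "t ! (j + 1) \<le> x \<and> x < t ! (j + 1 + q + 1)"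
      using bspl_nonzero_imp_between[OF assms(1), of "j + 1" q x] assms(2) by simp
    then show ?thesis using assms(4) by (auto intro!: mult_nonneg_nonneg divide_nonneg_nonneg)
  qed simp
qed

lemma bspl_nonneg:
  assumes "sorted t" "j + q + 1 < length t"
  shows "0 \<le> bspl t q j x"
  using assms(2)
proof (induction q arbitrary: j)
  case (Suc q)
  then show ?case using bspl_terms_nonneg[OF assms(1), of j q x] by simp
qed simp

lemma bspl_pos:
  assumes "sorted t" "j + q + 1 < length t" "x \<notin> set t" "t ! j < x" "x < t ! (j + q + 1)"
  shows "0 < bspl t q j x"
  using assms(2,4,5)
proof (induction q arbitrary: j)
  case (Suc q)
  have mono: "t ! (j + 1) \<le> t ! (j + q + 1)"
    using Suc.prems(1) assms(1) by (auto intro: sorted_nth_mono)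
  note terms = bspl_terms_nonneg[OF assms(1), of j q x]
  have nonneg: "0 \<le> bspl t q j x" "0 \<le> bspl t q (j + 1) x"
    using bspl_nonneg[OF assms(1)] Suc.prems(1) by simp_all
  have "x \<noteq> t ! (j + q + 1)" using assms(3) Suc.prems(1) by auto
  then consider "x < t ! (j + q + 1)" | "t ! (j + q + 1) < x" by linarith
  then show ?case
  proof cases
    case 1
    then have "0 < (x - t ! j) / (t ! (j + q + 1) - t ! j) * bspl t q j x"
      using Suc.IH[of j] Suc.prems by (intro mult_pos_pos) auto
    then show ?thesis using terms(2) nonneg Suc.prems(1) by simp
  next
    case 2
    then have "0 < (t ! (j + q + 2) - x) / (t ! (j + q + 2) - t ! (j + 1)) * bspl t q (j + 1) x"
      using Suc.IH[of "j + 1"] Suc.prems mono by (intro mult_pos_pos) auto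
    then show ?thesis using terms(1) nonneg Suc.prems(1) by simp
  qed
qed auto

lemma exists_Ioo_avoiding_finite_near:
  fixes lo hi y d :: real
  assumes "lo < hi" "lo \<le> y" "y \<le> hi" "d > 0" "finite F"
  shows "\<exists>u. lo < u \<and> u < hi \<and> u \<notin> F \<and> \<bar>u - y\<bar> < d"
proof -
  have lt: "max lo (y - d) < min hi (y + d)" using assms by auto
  have "infinite ({max lo (y - d)<..<min hi (y + d)} - F)"
    using infinite_Ioo[OF lt] assms(5) by (metis Diff_infinite_finite)
  then obtain u where "u \<in> {max lo (y - d)<..<min hi (y + d)} - F"
    by (metis ex_in_conv finite.emptyI)
  then show ?thesis by auto
qed

context
  fixes p :: "'n::finite \<Rightarrow> nat" and K0 :: "'n \<Rightarrow> real list" and k :: nat and j :: "'n \<Rightarrow> nat"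
  assumes sorted: "\<forall>i. sorted (knots K0 k i)"
    and index: "\<forall>i. j i + p i + 1 < length (knots K0 k i)"
begin

private abbreviation "lo \<equiv> (\<chi> i. knots K0 k i ! j i)"
private abbreviation "hi \<equiv> (\<chi> i. knots K0 k i ! (j i + p i + 1))"

lemma tp_bspline_nonzero_imp_mem_box:
  assumes "tp_bspline p K0 k j x \<noteq> 0"
  shows "\<forall>i. lo $ i \<le> x $ i \<and> x $ i < hi $ i"
proof
  fix i
  have "bspl (knots K0 k i) (p i) (j i) (x $ i) \<noteq> 0"
    using assms unfolding tp_bspline_def by auto
  then show "lo $ i \<le> x $ i \<and> x $ i < hi $ i"
    using bspl_nonzero_imp_between[of "knots K0 k i" "j i" "p i" "x $ i"] sorted index by simp
qed

lemma supp_tp_bspline_subset: "supp (tp_bspline p K0 k j) \<subseteq> cbox lo hi"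
  unfolding supp_def
  by (rule closure_minimal)
     (use tp_bspline_nonzero_imp_mem_box in \<open>auto simp: mem_box_cart less_imp_le\<close>)

lemma cbox_subset_supp_tp_bspline:
  assumes lohi: "\<forall>i. lo $ i < hi $ i"
  shows "cbox lo hi \<subseteq> supp (tp_bspline p K0 k j)"
proof
  fix y assume y: "y \<in> cbox lo hi"
  show "y \<in> supp (tp_bspline p K0 k j)"
    unfolding supp_def closure_approachable
  proof (intro allI impI)
    fix e :: real assume "e > 0"
    define d where "d = e / real CARD('n)"
    have "d > 0" using \<open>e > 0\<close> unfolding d_def by simp
    have near: "\<forall>i. \<exists>u. lo $ i < u \<and> u < hi $ i \<and> u \<notin> set (knots K0 k i) \<and> \<bar>u - y $ i\<bar> < d"
    proof
      fix i
      show "\<exists>u. lo $ i < u \<and> u < hi $ i \<and> u \<notin> set (knots K0 k i) \<and> \<bar>u - y $ i\<bar> < d"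
        by (rule exists_Ioo_avoiding_finite_near) (use lohi y \<open>d > 0\<close> in \<open>simp_all add: mem_box_cart\<close>)
    qed
    obtain f where f: "\<And>i. lo $ i < f i \<and> f i < hi $ i \<and> f i \<notin> set (knots K0 k i)
        \<and> \<bar>f i - y $ i\<bar> < d"
      using choice[OF near] by blast
    define x :: "real^'n" where "x = (\<chi> i. f i)"
    have "tp_bspline p K0 k j x > 0"
      unfolding tp_bspline_def
    proof (rule prod_pos)
      fix i
      show "0 < bspl (knots K0 k i) (p i) (j i) (x $ i)"
        using bspl_pos[of "knots K0 k i" "j i" "p i" "x $ i"] sorted index f[of i]
        unfolding x_def by simp
    qed
    moreover have "dist x y < e"
    proof -
      have "dist x y \<le> (\<Sum>i\<in>UNIV. \<bar>(x - y) $ i\<bar>)" unfolding dist_norm by (rule norm_le_l1_cart)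
      also have "\<dots> < (\<Sum>i\<in>(UNIV::'n set). d)"
        by (rule sum_strict_mono) (use f in \<open>auto simp: x_def\<close>)
      also have "\<dots> = e" unfolding d_def by simp
      finally show ?thesis .
    qed
    ultimately show "\<exists>x\<in>{x. tp_bspline p K0 k j x \<noteq> 0}. dist x y < e" by force
  qed
qed

lemma supp_tp_bspline_eq_cbox:
  assumes "supp (tp_bspline p K0 k j) \<noteq> {}"
  shows "\<forall>i. lo $ i < hi $ i" and "supp (tp_bspline p K0 k j) = cbox lo hi"
proof -
  have "{x. tp_bspline p K0 k j x \<noteq> 0} \<noteq> {}"
    using assms unfolding supp_def by (metis closure_empty)
  then obtain z where "tp_bspline p K0 k j z \<noteq> 0" by blast
  from tp_bspline_nonzero_imp_mem_box[OF this]
  show lohi: "\<forall>i. lo $ i < hi $ i" by (meson le_less_trans)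
  show "supp (tp_bspline p K0 k j) = cbox lo hi"
    using supp_tp_bspline_subset cbox_subset_supp_tp_bspline[OF lohi] by (rule subset_antisym)
qed

end

section \<open>Cells and their centers\<close>

lemma box_center_cbox:
  fixes a b :: "real^'n::finite"
  assumes "\<forall>i. a $ i \<le> b $ i"
  shows "box_center (cbox a b) = (\<chi> i. (a $ i + b $ i) / 2)"
proof -
  have "Inf ((\<lambda>x. x $ i) ` cbox a b) = a $ i" for i
  proof (rule cInf_eq_minimum)
    show "a $ i \<in> (\<lambda>x. x $ i) ` cbox a b"
      using assms by (intro image_eqI[of _ _ a]) (auto simp: mem_box_cart)
  qed (auto simp: mem_box_cart)
  moreover have "Sup ((\<lambda>x. x $ i) ` cbox a b) = b $ i" for i
  proof (rule cSup_eq_maximum)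
    show "b $ i \<in> (\<lambda>x. x $ i) ` cbox a b"
      using assms by (intro image_eqI[of _ _ b]) (auto simp: mem_box_cart)
  qed (auto simp: mem_box_cart)
  ultimately show ?thesis unfolding box_center_def by simp
qed

lemma box_center_in_cbox:
  fixes a b :: "real^'n::finite"
  assumes "\<forall>i. a $ i \<le> b $ i"
  shows "box_center (cbox a b) \<in> cbox a b"
  using box_center_cbox[OF assms] assms by (auto simp: mem_box_cart)

lemma dist_le_sum_sides_cbox:
  fixes a b x y :: "real^'n::finite"
  assumes "x \<in> cbox a b" "y \<in> cbox a b"
  shows "dist x y \<le> (\<Sum>i\<in>UNIV. b $ i - a $ i)"
proof -
  have "dist x y \<le> (\<Sum>i\<in>UNIV. \<bar>(x - y) $ i\<bar>)" unfolding dist_norm by (rule norm_le_l1_cart)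
  also have "\<dots> \<le> (\<Sum>i\<in>UNIV. b $ i - a $ i)"
  proof (rule sum_mono)
    fix i
    have "a $ i \<le> x $ i" "x $ i \<le> b $ i" "a $ i \<le> y $ i" "y $ i \<le> b $ i"
      using assms by (auto simp: mem_box_cart)
    then show "\<bar>(x - y) $ i\<bar> \<le> b $ i - a $ i" by auto
  qed
  finally show ?thesis .
qed

lemma cell_eq_cbox:
  fixes K0 :: "'n::finite \<Rightarrow> real list"
  assumes "\<forall>i. set (K0 i) \<subseteq> {0..1}" "C \<in> cells K0 k"
  obtains a b where "C = cbox a b" "\<forall>i. a $ i < b $ i" "\<forall>i. b $ i - a $ i \<le> (1/2)^k"
proof -
  obtain a b where ab: "C = cbox a b" "\<forall>i. is_span (knots K0 k i) (a $ i) (b $ i)"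
    using assms(2) unfolding cells_def by auto
  moreover have "\<forall>i. a $ i < b $ i" using ab(2) unfolding is_span_def by blast
  moreover have "\<forall>i. b $ i - a $ i \<le> (1/2)^k"
  proof
    fix i
    show "b $ i - a $ i \<le> (1/2)^k" using span_knots_le[of K0 i k] ab(2) assms(1) by blast
  qed
  ultimately show ?thesis using that by blast
qed

lemma box_center_cell_in:
  fixes K0 :: "'n::finite \<Rightarrow> real list"
  assumes "\<forall>i. set (K0 i) \<subseteq> {0..1}" "C \<in> cells K0 k"
  shows "box_center C \<in> C"
proof -
  obtain a b where "C = cbox a b" "\<forall>i. a $ i < b $ i" using cell_eq_cbox[OF assms] by blast
  then show ?thesis using box_center_in_cbox[of a b] by (simp add: less_imp_le)
qed

lemma dist_box_center_cell_le:
  fixes K0 :: "'n::finite \<Rightarrow> real list"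
  assumes "\<forall>i. set (K0 i) \<subseteq> {0..1}" "C \<in> cells K0 k" "x \<in> C"
  shows "dist (box_center C) x \<le> real CARD('n) * (1/2)^k"
proof -
  obtain a b where ab: "C = cbox a b" "\<forall>i. b $ i - a $ i \<le> (1/2)^k"
    using cell_eq_cbox[OF assms(1,2)] by blast
  have "dist (box_center C) x \<le> (\<Sum>i\<in>UNIV. b $ i - a $ i)"
    using dist_le_sum_sides_cbox box_center_cell_in[OF assms(1,2)] assms(3) ab(1) by blast
  also have "\<dots> \<le> (\<Sum>i\<in>(UNIV::'n set). (1/2)^k)" by (rule sum_mono) (use ab in auto)
  finally show ?thesis by simp
qed

section \<open>Hierarchical basis functions and neighbors\<close>

lemma dist_supp_tp_bspline_le:
  fixes p :: "'n::finite \<Rightarrow> nat" and K0 :: "'n \<Rightarrow> real list"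
  assumes so: "\<forall>i. sorted (K0 i)" and s01: "\<forall>i. set (K0 i) \<subseteq> {0..1}"
    and j: "\<forall>i. j i + p i + 1 < length (knots K0 k i)"
    and xy: "x \<in> supp (tp_bspline p K0 k j)" "y \<in> supp (tp_bspline p K0 k j)"
  shows "dist x y \<le> (\<Sum>i\<in>UNIV. real (p i + 1)) * (1/2)^k"
proof -
  have sok: "\<forall>i. sorted (knots K0 k i)" using so by (simp add: sorted_knots)
  define lo :: "real^'n" where "lo = (\<chi> i. knots K0 k i ! j i)"
  define hi :: "real^'n" where "hi = (\<chi> i. knots K0 k i ! (j i + p i + 1))"
  have "x \<in> cbox lo hi" "y \<in> cbox lo hi"
    using xy supp_tp_bspline_subset[OF sok j] unfolding lo_def hi_def by blast+
  then have "dist x y \<le> (\<Sum>i\<in>UNIV. hi $ i - lo $ i)" by (rule dist_le_sum_sides_cbox)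
  also have "\<dots> \<le> (\<Sum>i\<in>UNIV. real (p i + 1) * (1/2)^k)"
  proof (rule sum_mono)
    fix i
    have spans: "\<And>a b. is_span (knots K0 k i) a b \<Longrightarrow> b - a \<le> (1/2)^k"
      using span_knots_le[of K0 i k] s01 by blast
    have "j i + (p i + 1) < length (knots K0 k i)" using j by (simp add: add.assoc)
    from knot_distance_le[OF sok[rule_format] spans _ this]
    show "hi $ i - lo $ i \<le> real (p i + 1) * (1/2)^k"
      unfolding lo_def hi_def by (simp add: add.assoc)
  qed
  finally show ?thesis by (simp add: sum_distrib_right)
qed

lemma supp_hbasis_contains_mesh_cell:
  fixes p :: "'n::finite \<Rightarrow> nat" and K0 :: "'n \<Rightarrow> real list"
  assumes so: "\<forall>i. sorted (K0 i)"
    and j: "\<forall>i. j i + p i + 1 < length (knots K0 k i)"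
    and supp: "supp (tp_bspline p K0 k j) \<subseteq> \<Omega> k" "\<not> supp (tp_bspline p K0 k j) \<subseteq> \<Omega> (Suc k)"
  obtains Q where "(k, Q) \<in> mesh K0 \<Omega>" "Q \<subseteq> supp (tp_bspline p K0 k j)"
proof -
  have sok: "\<forall>i. sorted (knots K0 k i)" using so by (simp add: sorted_knots)
  define lo :: "real^'n" where "lo = (\<chi> i. knots K0 k i ! j i)"
  define hi :: "real^'n" where "hi = (\<chi> i. knots K0 k i ! (j i + p i + 1))"
  obtain x where x: "x \<in> supp (tp_bspline p K0 k j)" "x \<notin> \<Omega> (Suc k)" using supp(2) by auto
  then have "supp (tp_bspline p K0 k j) \<noteq> {}" by auto
  note box = supp_tp_bspline_eq_cbox[OF sok j this, folded lo_def hi_def]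
  have knots_lohi: "lo $ i \<in> set (knots K0 k i)" "hi $ i \<in> set (knots K0 k i)" for i
    using j unfolding lo_def hi_def by (auto dest: spec[of _ i])
  have spans: "\<forall>i. \<exists>ab. is_span (knots K0 k i) (fst ab) (snd ab) \<and> lo $ i \<le> fst ab \<and> fst ab \<le> x $ i
      \<and> x $ i \<le> snd ab \<and> snd ab \<le> hi $ i"
  proof
    fix i
    have "lo $ i < hi $ i" "lo $ i \<le> x $ i" "x $ i \<le> hi $ i"
      using box x(1) by (auto simp: mem_box_cart)
    then obtain a b where "is_span (knots K0 k i) a b" "lo $ i \<le> a" "a \<le> x $ i" "x $ i \<le> b" "b \<le> hi $ i"
      using exists_span_containing[OF knots_lohi] by blast
    then show "\<exists>ab. is_span (knots K0 k i) (fst ab) (snd ab) \<and> lo $ i \<le> fst ab \<and> fst ab \<le> x $ i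
      \<and> x $ i \<le> snd ab \<and> snd ab \<le> hi $ i"
      by (intro exI[of _ "(a, b)"]) simp
  qed
  obtain f where f: "\<And>i. is_span (knots K0 k i) (fst (f i)) (snd (f i)) \<and> lo $ i \<le> fst (f i)
      \<and> fst (f i) \<le> x $ i \<and> x $ i \<le> snd (f i) \<and> snd (f i) \<le> hi $ i"
    using choice[OF spans] by blast
  define Q where "Q = cbox (\<chi> i. fst (f i)) (\<chi> i. snd (f i))"
  have "Q \<in> cells K0 k"
    unfolding Q_def cells_def
    by (rule CollectI, rule exI[of _ "\<chi> i. fst (f i)"], rule exI[of _ "\<chi> i. snd (f i)"]) (use f in simp)
  moreover have "x \<in> Q" unfolding Q_def using f by (simp add: mem_box_cart)
  moreover have "Q \<subseteq> supp (tp_bspline p K0 k j)"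
    unfolding box(2) Q_def
  proof
    fix y assume "y \<in> cbox (\<chi> i. fst (f i)) (\<chi> i. snd (f i))"
    then have "fst (f i) \<le> y $ i \<and> y $ i \<le> snd (f i)" for i by (simp add: mem_box_cart)
    then show "y \<in> cbox lo hi" unfolding mem_box_cart using f by (meson order_trans)
  qed
  ultimately have "(k, Q) \<in> mesh K0 \<Omega>" "Q \<subseteq> supp (tp_bspline p K0 k j)"
    using supp(1) x(2) unfolding mesh_def by auto
  then show ?thesis by (rule that)
qed

text \<open>This is where admissibility enters: it bounds the level of the basis function from below.\<close>

lemma dist_box_center_common_supp:
  fixes p :: "'n::finite \<Rightarrow> nat" and K0 :: "'n \<Rightarrow> real list"
  assumes so: "\<forall>i. sorted (K0 i)" and s01: "\<forall>i. set (K0 i) \<subseteq> {0..1}"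
    and adm: "admissible p K0 \<Omega>"
    and M: "(l, M) \<in> mesh K0 \<Omega>" and M0: "(l0, M0) \<in> mesh K0 \<Omega>"
    and \<beta>: "\<beta> \<in> hbasis p K0 \<Omega>" "M \<subseteq> supp \<beta>" "M0 \<subseteq> supp \<beta>"
  shows "dist (box_center M) (box_center M0) \<le> 2 * (\<Sum>i\<in>UNIV. real (p i + 1)) * (1/2)^l"
proof -
  obtain k where k: "\<beta> \<in> bsplines p K0 k" and supp: "supp \<beta> \<subseteq> \<Omega> k" "\<not> supp \<beta> \<subseteq> \<Omega> (Suc k)"
    using \<beta>(1) unfolding hbasis_def by blast
  then obtain j where j: "\<beta> = tp_bspline p K0 k j" "\<forall>i. j i + p i + 1 < length (knots K0 k i)"
    unfolding bsplines_def by blast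
  obtain Q where "(k, Q) \<in> mesh K0 \<Omega>" "Q \<subseteq> supp \<beta>"
    using supp_hbasis_contains_mesh_cell[OF so j(2)] supp j(1) by metis
  then have "(k, Q) \<in> neighbors p K0 \<Omega> (l, M)"
    unfolding neighbors_def using \<beta> by auto
  then have lk: "l \<le> k + 1" using adm M unfolding admissible_def by fastforce
  have "box_center M \<in> supp \<beta>" "box_center M0 \<in> supp \<beta>"
    using box_center_cell_in[OF s01] M M0 \<beta>(2,3) unfolding mesh_def by blast+
  then have "dist (box_center M) (box_center M0) \<le> (\<Sum>i\<in>UNIV. real (p i + 1)) * (1/2)^k"
    using dist_supp_tp_bspline_le[OF so s01 j(2)] j(1) by simp
  also have "\<dots> \<le> (\<Sum>i\<in>UNIV. real (p i + 1)) * (2 * (1/2)^l)"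
  proof (rule mult_left_mono)
    have "(1/2::real)^(k + 1) \<le> (1/2)^l" using lk by (intro power_decreasing) auto
    then show "(1/2::real)^k \<le> 2 * (1/2)^l" by simp
  qed (auto intro: sum_nonneg)
  finally show ?thesis by simp
qed

section \<open>The refinement procedure\<close>

lemma marked_in_mesh_near:
  fixes p :: "'n::finite \<Rightarrow> nat" and K0 :: "'n \<Rightarrow> real list"
  assumes so: "\<forall>i. sorted (K0 i)" and s01: "\<forall>i. set (K0 i) \<subseteq> {0..1}"
    and adm: "admissible p K0 \<Omega>"
    and T': "(L, M') \<in> mesh K0 \<Omega>"
    and marked: "(l, M) \<in> marked p K0 \<Omega> {(L, M')} n"
  shows "(l, M) \<in> mesh K0 \<Omega>"
    and "dist (box_center M) (box_center M') \<le> 4 * (\<Sum>i\<in>UNIV. real (p i + 1)) * (1/2)^l"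
proof -
  define P where "P = (\<Sum>i\<in>UNIV. real (p i + 1))"
  have "P \<ge> 0" unfolding P_def by (intro sum_nonneg) auto
  have "(l, M) \<in> mesh K0 \<Omega> \<and> dist (box_center M) (box_center M') \<le> 4 * P * (1/2)^l"
    using marked
  proof (induction n arbitrary: l M)
    case 0
    then show ?case using T' \<open>P \<ge> 0\<close> by simp
  next
    case (Suc n)
    show ?case
    proof (cases "(l, M) \<in> marked p K0 \<Omega> {(L, M')} n")
      case True
      then show ?thesis using Suc.IH by blast
    next
      case False
      then obtain l0 M0 where m0: "(l0, M0) \<in> marked p K0 \<Omega> {(L, M')} n"
        and "(l, M) \<in> bad_neighbors p K0 \<Omega> (l0, M0)"
        using Suc.prems by auto
      then have l0: "l0 = l + 1" and Mm: "(l, M) \<in> mesh K0 \<Omega>"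
        and "\<exists>\<beta>\<in>hbasis p K0 \<Omega>. M0 \<subseteq> supp \<beta> \<and> M \<subseteq> supp \<beta>"
        unfolding bad_neighbors_def neighbors_def by auto
      moreover note ih = Suc.IH[OF m0]
      ultimately have "dist (box_center M) (box_center M0) \<le> 2 * P * (1/2)^l"
        using dist_box_center_common_supp[OF so s01 adm Mm] unfolding P_def by blast
      moreover have "4 * P * (1/2)^l0 = 2 * P * (1/2)^l" using l0 by simp
      ultimately show ?thesis
        using Mm ih dist_triangle[of "box_center M" "box_center M'" "box_center M0"] by linarith
    qed
  qed
  then show "(l, M) \<in> mesh K0 \<Omega>" "dist (box_center M) (box_center M') \<le> 4 * P * (1/2)^l"
    by auto
qed

lemma new_cell_meets_marked:
  assumes "(k, C) \<in> mesh K0 (refine p K0 \<Omega> M) - mesh K0 \<Omega>"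
  obtains l D y where "k = Suc l" "(l, D) \<in> marked_final p K0 \<Omega> M" "y \<in> C" "y \<in> D"
proof -
  have C: "C \<in> cells K0 k" "C \<subseteq> refine p K0 \<Omega> M k" "\<not> C \<subseteq> refine p K0 \<Omega> M (Suc k)"
    and old: "(k, C) \<notin> mesh K0 \<Omega>"
    using assms unfolding mesh_def by auto
  have "\<Omega> (Suc k) \<subseteq> refine p K0 \<Omega> M (Suc k)" unfolding refine_def by auto
  then have "\<not> C \<subseteq> \<Omega> (Suc k)" using C(3) by blast
  then have "\<not> C \<subseteq> \<Omega> k" using old C(1) unfolding mesh_def by blast
  then obtain l where "k = Suc l" using C(2) unfolding refine_def by (cases k) auto
  with C(2) \<open>\<not> C \<subseteq> \<Omega> k\<close> show ?thesis
    using that unfolding refine_def by auto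
qed

lemma dist_box_center_new_cell_le:
  fixes p :: "'n::finite \<Rightarrow> nat" and K0 :: "'n \<Rightarrow> real list"
  assumes so: "\<forall>i. sorted (K0 i)" and s01: "\<forall>i. set (K0 i) \<subseteq> {0..1}"
    and adm: "admissible p K0 \<Omega>" and T': "(L, M') \<in> mesh K0 \<Omega>"
    and T: "(k, C) \<in> mesh K0 (refine p K0 \<Omega> {(L, M')}) - mesh K0 \<Omega>"
  shows "dist (box_center C) (box_center M')
    \<le> (3 * real CARD('n) + 8 * (\<Sum>i\<in>UNIV. real (p i + 1))) * (1/2)^k"
proof -
  define P where "P = (\<Sum>i\<in>UNIV. real (p i + 1))"
  define d where "d = real CARD('n)"
  obtain l D y where l: "k = Suc l" and D: "(l, D) \<in> marked_final p K0 \<Omega> {(L, M')}"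
    and y: "y \<in> C" "y \<in> D"
    using new_cell_meets_marked[OF T] by metis
  then obtain n where "(l, D) \<in> marked p K0 \<Omega> {(L, M')} n" unfolding marked_final_def by blast
  note D_near = marked_in_mesh_near[OF so s01 adm T' this, folded P_def]
  have "C \<in> cells K0 k" "D \<in> cells K0 l" using T D_near(1) unfolding mesh_def by auto
  then have "dist (box_center C) y \<le> d * (1/2)^k" "dist y (box_center D) \<le> d * (1/2)^l"
    using dist_box_center_cell_le[OF s01] y unfolding d_def by (auto simp: dist_commute)
  then have "dist (box_center C) (box_center M') \<le> d * (1/2)^k + d * (1/2)^l + 4 * P * (1/2)^l"
    using D_near(2) dist_triangle[of "box_center C" "box_center M'" y]
      dist_triangle[of y "box_center M'" "box_center D"] by linarith
  then show ?thesis using l unfolding P_def d_def by (simp add: algebra_simps)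
qed

lemma two_powr_minus: "(2::real) powr (- real n) = (1/2)^n"
  by (simp add: powr_minus powr_realpow power_one_over inverse_eq_divide)

theorem lemma5p5:
  fixes p :: "'n::finite \<Rightarrow> nat" and K0 :: "'n \<Rightarrow> real list"
  assumes "CARD('n) \<ge> 2"
    and "\<forall>i. p i \<ge> 1"
    and "\<forall>i. open_knots (p i) (K0 i)"
  shows "\<exists>C>0. \<forall>\<Omega> T'. hier_domains K0 \<Omega> \<and> admissible p K0 \<Omega> \<and> T' \<in> mesh K0 \<Omega> \<longrightarrow>
     (\<forall>T \<in> mesh K0 (refine p K0 \<Omega> {T'}) - mesh K0 \<Omega>.
        dist (box_center (snd T)) (box_center (snd T')) \<le> C * 2 powr (- real (fst T)))"
proof -
  have so: "\<forall>i. sorted (K0 i)" and s01: "\<forall>i. set (K0 i) \<subseteq> {0..1}"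
    using assms(3) unfolding open_knots_def by auto
  have "0 < 3 * real CARD('n) + 8 * (\<Sum>i\<in>UNIV. real (p i + 1))"
    by (simp add: add_pos_nonneg sum_nonneg)
  then show ?thesis
    using dist_box_center_new_cell_le[OF so s01]
    by (intro exI[of _ "3 * real CARD('n) + 8 * (\<Sum>i\<in>UNIV. real (p i + 1))"])
       (force simp: two_powr_minus)
qed

end
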